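(* Let $\mathcal{X}$ be a context space, $\mathcal{A}$ a finite arm set, $\hat f:\mathcal{X}\times\mathcal{A}\to[0,1]$, $\hat\pi_{\text{con}}:\mathcal{X}\to\mathcal{A}$, $\hat U_{\text{con}}>0$, $\hat g:\mathcal{X}\to 2^{\mathcal{A}}$, $\beta_{\max}\in(0,1)$ and $\eta\ge 1$. For $\zeta>0$ let $C(x,\zeta):=\{a\in\hat g(x):\hat f(x,\hat\pi_{\text{con}}(x))-\hat f(x,a)\le\hat U_{\text{con}}/\zeta\}$ (assumed nonempty), let $\mathrm{Unif}_\zeta(\cdot\mid x)$ be the uniform distribution on $C(x,\zeta)$, and define $$p(a\mid x):=(1-\beta_{\max})\mathrm{Unif}_{\beta_{\max}/\eta}(a\mid x)+\int_0^{\beta_{\max}}\mathrm{Unif}_{\beta/\eta}(a\mid x)\,d\beta .$$ Then for all $x\in\mathcal{X}$ and $a\in\mathcal{A}$: if $a\in C(x,\beta_{\max}/\eta)$, then $p(a\mid x)\ge\frac{1-\beta_{\max}}{|C(x,\beta_{\max}/\eta)|}+\frac{\beta_{\max}}{|\hat g(x)|}\ge\frac{1}{|\hat g(x)|}$; if $a\notin C(x,\beta_{\max}/\eta)$ and $a\in\hat g(x)$, then $p(a\mid x)\ge\frac{\eta}{|\hat g(x)|}\frac{\hat U_{\text{con}}}{\hat f(x,\hat\pi_{\text{con}}(x))-\hat f(x,a)}\ge\frac{\eta\hat U_{\text{con}}}{|\hat g(x)|}$; and otherwise $p(a\mid x)\ge 0$. *)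

theory Defs
  imports "HOL-Analysis.Analysis"
begin

definition cand_set ::
  "('x \<Rightarrow> 'a \<Rightarrow> real) \<Rightarrow> ('x \<Rightarrow> 'a) \<Rightarrow> real \<Rightarrow> ('x \<Rightarrow> 'a set) \<Rightarrow> 'x \<Rightarrow> real \<Rightarrow> 'a set"
where
  "cand_set f pic U g x \<zeta> = {a \<in> g x. f x (pic x) - f x a \<le> U / \<zeta>}"

definition unif_pol ::
  "('x \<Rightarrow> 'a \<Rightarrow> real) \<Rightarrow> ('x \<Rightarrow> 'a) \<Rightarrow> real \<Rightarrow> ('x \<Rightarrow> 'a set) \<Rightarrow> real \<Rightarrow> 'x \<Rightarrow> 'a \<Rightarrow> real"
where
  "unif_pol f pic U g \<zeta> x a =
     (if a \<in> cand_set f pic U g x \<zeta> then 1 / real (card (cand_set f pic U g x \<zeta>)) else 0)"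

definition mix_pol ::
  "('x \<Rightarrow> 'a \<Rightarrow> real) \<Rightarrow> ('x \<Rightarrow> 'a) \<Rightarrow> real \<Rightarrow> ('x \<Rightarrow> 'a set) \<Rightarrow> real \<Rightarrow> real \<Rightarrow> 'x \<Rightarrow> 'a \<Rightarrow> real"
where
  "mix_pol f pic U g \<beta>max \<eta> x a =
     (1 - \<beta>max) * unif_pol f pic U g (\<beta>max / \<eta>) x a
     + integral {0..\<beta>max} (\<lambda>\<beta>. unif_pol f pic U g (\<beta> / \<eta>) x a)"

end

theory Submission
  imports Defs
begin

text \<open>The candidate sets \<open>C(x, \<beta>/\<eta>)\<close> shrink as \<open>\<beta>\<close> grows, so on the set of \<open>\<beta>\<close> where a fixed
  arm \<open>a\<close> is a candidate, the integrand \<open>Unif\<^sub>\<beta>\<^sub>/\<^sub>\<eta>(a | x) = 1/|C(x, \<beta>/\<eta>)|\<close> is monotone and at least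
  \<open>1/|g(x)|\<close>, and it vanishes beyond. That set is all of \<open>(0, \<beta>\<^sub>m\<^sub>a\<^sub>x]\<close> if \<open>a \<in> C(x, \<beta>\<^sub>m\<^sub>a\<^sub>x/\<eta>)\<close>, and
  the interval \<open>(0, \<eta> U / \<Delta>]\<close> with \<open>\<Delta> = f(x, \<pi>(x)) - f(x, a)\<close> otherwise; integrating the lower
  bound \<open>1/|g(x)|\<close> over it gives both estimates.\<close>

lemma integral_ge_mono_then_zero:
  fixes h :: "real \<Rightarrow> real"
  assumes "a \<le> c" "c \<le> b"
    and mono: "mono_on {a<..c} h"
    and lower: "\<And>t. t \<in> {a<..c} \<Longrightarrow> L \<le> h t"
    and zero: "\<And>t. t \<in> {c<..b} \<Longrightarrow> h t = 0"
  shows "h integrable_on {a..b}" and "(c - a) * L \<le> integral {a..b} h"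
proof -
  define m where "m t = (if t \<le> a then L else h t)" for t
  have "mono_on {a..c} m"
    by (rule mono_onI) (auto simp: m_def lower intro: mono_onD[OF mono])
  then have m_int: "m integrable_on {a..c}"
    by (rule integrable_on_mono_on)
  have hm: "m t = h t" if "t \<in> {a..c} - {a}" for t
    using that by (simp add: m_def)
  have h_int_ac: "h integrable_on {a..c}"
    by (rule integrable_spike[OF m_int negligible_sing[of a]]) (use hm in auto)
  have h_ac: "integral {a..c} h = integral {a..c} m"
    by (rule integral_spike[OF negligible_sing[of a]]) (use hm in auto)
  have h_int_cb: "h integrable_on {c..b}"
    by (rule integrable_spike[OF integrable_0 negligible_sing[of c]]) (use zero in auto)
  have h_cb: "integral {c..b} h = 0"
    using integral_spike[OF negligible_sing[of c], of "{c..b}" h "\<lambda>_. 0"] zero by auto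
  show h_int: "h integrable_on {a..b}"
    using Henstock_Kurzweil_Integration.integrable_combine[OF \<open>a \<le> c\<close> \<open>c \<le> b\<close> h_int_ac h_int_cb] .
  have "(c - a) * L = integral {a..c} (\<lambda>_. L)"
    using \<open>a \<le> c\<close> by simp
  also have "\<dots> \<le> integral {a..c} m"
    by (rule integral_le[OF integrable_const_ivl m_int]) (auto simp: m_def lower)
  also have "\<dots> = integral {a..b} h"
    using Henstock_Kurzweil_Integration.integral_combine[OF \<open>a \<le> c\<close> \<open>c \<le> b\<close> h_int] h_ac h_cb by simp
  finally show "(c - a) * L \<le> integral {a..b} h" .
qed

lemma inverse_card_le_mixture:
  assumes "finite B" "A \<subseteq> B" "A \<noteq> {}" "\<beta> \<le> 1"
  shows "1 / real (card B) \<le> (1 - \<beta>) / real (card A) + \<beta> / real (card B)"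
proof -
  have "0 < card A" "card A \<le> card B"
    using assms(1-3) by (auto simp: card_gt_0_iff intro: finite_subset card_mono)
  then have "(1 - \<beta>) / real (card B) \<le> (1 - \<beta>) / real (card A)"
    using assms(4) by (intro divide_left_mono) auto
  then show ?thesis
    by (simp add: diff_divide_distrib)
qed

lemma cand_set_subset: "cand_set f pic U g x \<zeta> \<subseteq> g x"
  by (auto simp: cand_set_def)

lemma cand_set_antimono:
  assumes "0 \<le> U" "0 < \<zeta>\<^sub>1" "\<zeta>\<^sub>1 \<le> \<zeta>\<^sub>2"
  shows "cand_set f pic U g x \<zeta>\<^sub>2 \<subseteq> cand_set f pic U g x \<zeta>\<^sub>1"
proof -
  have "U / \<zeta>\<^sub>2 \<le> U / \<zeta>\<^sub>1"
    using assms by (simp add: frac_le)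
  then show ?thesis
    by (auto simp: cand_set_def)
qed

lemma mem_cand_set_divide_iff:
  assumes "0 < t"
  shows "a \<in> cand_set f pic U g x (t / \<eta>) \<longleftrightarrow> a \<in> g x \<and> (f x (pic x) - f x a) * t \<le> U * \<eta>"
  using assms by (simp add: cand_set_def pos_le_divide_eq)

lemma gap_gt_if_not_mem_cand_set:
  assumes "a \<in> g x" "a \<notin> cand_set f pic U g x \<zeta>"
  shows "U / \<zeta> < f x (pic x) - f x a"
  using assms by (auto simp: cand_set_def)

lemma gap_pos_if_not_mem_cand_set:
  assumes "0 \<le> U" "0 < \<zeta>" "a \<in> g x" "a \<notin> cand_set f pic U g x \<zeta>"
  shows "0 < f x (pic x) - f x a"
  using gap_gt_if_not_mem_cand_set[OF assms(3,4)] divide_nonneg_pos[OF assms(1,2)] by linarith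

lemma unif_pol_nonneg: "0 \<le> unif_pol f pic U g \<zeta> x a"
  by (simp add: unif_pol_def)

lemma card_cand_set_bounds:
  assumes "finite (g x)" "a \<in> cand_set f pic U g x \<zeta>"
  shows "1 \<le> card (cand_set f pic U g x \<zeta>)" "card (cand_set f pic U g x \<zeta>) \<le> card (g x)"
  using assms cand_set_subset[of f pic U g x \<zeta>]
  by (auto simp: Suc_le_eq card_gt_0_iff intro: finite_subset card_mono)

lemma unif_pol_ge_inverse_card:
  assumes "finite (g x)" "a \<in> cand_set f pic U g x \<zeta>"
  shows "1 / real (card (g x)) \<le> unif_pol f pic U g \<zeta> x a"
  using card_cand_set_bounds[OF assms] assms(2) by (simp add: unif_pol_def frac_le)

lemma unif_pol_mono:
  assumes "finite (g x)" "0 \<le> U" "0 < \<zeta>\<^sub>1" "\<zeta>\<^sub>1 \<le> \<zeta>\<^sub>2" "a \<in> cand_set f pic U g x \<zeta>\<^sub>2"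
  shows "unif_pol f pic U g \<zeta>\<^sub>1 x a \<le> unif_pol f pic U g \<zeta>\<^sub>2 x a"
proof -
  have sub: "cand_set f pic U g x \<zeta>\<^sub>2 \<subseteq> cand_set f pic U g x \<zeta>\<^sub>1"
    using cand_set_antimono assms(2-4) .
  have fin: "finite (cand_set f pic U g x \<zeta>\<^sub>1)"
    using assms(1) cand_set_subset finite_subset by metis
  have "1 \<le> card (cand_set f pic U g x \<zeta>\<^sub>2)"
    using card_cand_set_bounds(1) assms(1,5) .
  moreover have "card (cand_set f pic U g x \<zeta>\<^sub>2) \<le> card (cand_set f pic U g x \<zeta>\<^sub>1)"
    using card_mono[OF fin sub] .
  ultimately show ?thesis
    using assms(5) sub by (auto simp: unif_pol_def frac_le)
qed

lemma integral_unif_pol_ge: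
  assumes "finite (g x)" "0 \<le> U" "0 < \<eta>" "0 \<le> c" "c \<le> b"
    and inside: "\<And>t. t \<in> {0<..c} \<Longrightarrow> a \<in> cand_set f pic U g x (t / \<eta>)"
    and outside: "\<And>t. t \<in> {c<..b} \<Longrightarrow> a \<notin> cand_set f pic U g x (t / \<eta>)"
  shows "c / real (card (g x)) \<le> integral {0..b} (\<lambda>t. unif_pol f pic U g (t / \<eta>) x a)"
proof -
  have mono: "mono_on {0<..c} (\<lambda>t. unif_pol f pic U g (t / \<eta>) x a)"
  proof (rule mono_onI)
    fix s t :: real
    assume "s \<in> {0<..c}" "t \<in> {0<..c}" "s \<le> t"
    moreover from this have "s / \<eta> \<le> t / \<eta>"
      using \<open>0 < \<eta>\<close> by (simp add: divide_right_mono)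
    ultimately show "unif_pol f pic U g (s / \<eta>) x a \<le> unif_pol f pic U g (t / \<eta>) x a"
      using \<open>0 < \<eta>\<close> inside[OF \<open>t \<in> {0<..c}\<close>] assms(1,2) by (simp add: unif_pol_mono)
  qed
  have lower: "1 / real (card (g x)) \<le> unif_pol f pic U g (t / \<eta>) x a" if "t \<in> {0<..c}" for t
    using unif_pol_ge_inverse_card[OF assms(1) inside[OF that]] .
  have zero: "unif_pol f pic U g (t / \<eta>) x a = 0" if "t \<in> {c<..b}" for t
    using outside[OF that] by (simp add: unif_pol_def)
  show ?thesis
    using integral_ge_mono_then_zero(2)[OF \<open>0 \<le> c\<close> \<open>c \<le> b\<close> mono lower zero] by simp
qed

lemma integral_unif_pol_nonneg: "0 \<le> integral {0..b} (\<lambda>t. unif_pol f pic U g (t / \<eta>) x a)"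
proof (cases "(\<lambda>t. unif_pol f pic U g (t / \<eta>) x a) integrable_on {0..b}")
  case True
  then show ?thesis
    by (rule integral_nonneg) (rule unif_pol_nonneg)
qed (simp add: not_integrable_integral)

lemma mix_pol_ge_integral:
  assumes "\<beta>max \<le> 1"
  shows "integral {0..\<beta>max} (\<lambda>t. unif_pol f pic U g (t / \<eta>) x a) \<le> mix_pol f pic U g \<beta>max \<eta> x a"
  using assms unif_pol_nonneg[of f pic U g "\<beta>max / \<eta>" x a] by (simp add: mix_pol_def)

lemma mix_pol_nonneg:
  assumes "\<beta>max \<le> 1"
  shows "0 \<le> mix_pol f pic U g \<beta>max \<eta> x a"
  using order_trans[OF integral_unif_pol_nonneg mix_pol_ge_integral[OF assms]] .

lemma mix_pol_ge_mem_cand_set: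
  assumes "finite (g x)" "0 \<le> U" "0 < \<eta>" "0 \<le> \<beta>max"
    and a: "a \<in> cand_set f pic U g x (\<beta>max / \<eta>)"
  shows "(1 - \<beta>max) / real (card (cand_set f pic U g x (\<beta>max / \<eta>))) + \<beta>max / real (card (g x))
    \<le> mix_pol f pic U g \<beta>max \<eta> x a"
proof -
  have inside: "a \<in> cand_set f pic U g x (t / \<eta>)" if "t \<in> {0<..\<beta>max}" for t
  proof -
    have "t / \<eta> \<le> \<beta>max / \<eta>"
      using that assms(3) by (simp add: divide_right_mono)
    then have "cand_set f pic U g x (\<beta>max / \<eta>) \<subseteq> cand_set f pic U g x (t / \<eta>)"
      using that assms(3) by (intro cand_set_antimono[OF assms(2)]) auto
    then show ?thesis
      using a by blast
  qed
  have "\<beta>max / real (card (g x)) \<le> integral {0..\<beta>max} (\<lambda>t. unif_pol f pic U g (t / \<eta>) x a)"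
    using integral_unif_pol_ge[OF assms(1-4) order_refl inside] by simp
  then show ?thesis
    using a by (simp add: mix_pol_def unif_pol_def)
qed

lemma mix_pol_ge_not_mem_cand_set:
  assumes "finite (g x)" "0 \<le> U" "0 < \<eta>" "0 < \<beta>max" "\<beta>max \<le> 1"
    and a: "a \<in> g x" "a \<notin> cand_set f pic U g x (\<beta>max / \<eta>)"
  shows "\<eta> / real (card (g x)) * (U / (f x (pic x) - f x a)) \<le> mix_pol f pic U g \<beta>max \<eta> x a"
proof -
  define \<Delta> where "\<Delta> = f x (pic x) - f x a"
  have "0 < \<Delta>"
    using gap_pos_if_not_mem_cand_set[OF assms(2) _ a] assms(3,4) by (simp add: \<Delta>_def)
  have "U * \<eta> < \<Delta> * \<beta>max"
    using gap_gt_if_not_mem_cand_set[OF a] assms(4) by (simp add: \<Delta>_def pos_divide_less_eq)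
  define c where "c = U * \<eta> / \<Delta>"
  have c: "0 \<le> c" "c \<le> \<beta>max"
    using \<open>0 < \<Delta>\<close> \<open>U * \<eta> < \<Delta> * \<beta>max\<close> assms(2,3)
    by (auto simp: c_def pos_divide_le_eq mult.commute)
  have mem_iff: "a \<in> cand_set f pic U g x (t / \<eta>) \<longleftrightarrow> t \<le> c" if "0 < t" for t
  proof -
    have "a \<in> cand_set f pic U g x (t / \<eta>) \<longleftrightarrow> \<Delta> * t \<le> U * \<eta>"
      using mem_cand_set_divide_iff[OF that, of a f pic U g x \<eta>] a(1) by (simp add: \<Delta>_def)
    also have "\<dots> \<longleftrightarrow> t \<le> c"
      using \<open>0 < \<Delta>\<close> by (simp add: c_def le_divide_eq mult.commute)
    finally show ?thesis .
  qed
  have inside: "a \<in> cand_set f pic U g x (t / \<eta>)" if "t \<in> {0<..c}" for t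
    using mem_iff that by simp
  have outside: "a \<notin> cand_set f pic U g x (t / \<eta>)" if "t \<in> {c<..\<beta>max}" for t
    using mem_iff that c(1) by simp
  have "c / real (card (g x)) \<le> integral {0..\<beta>max} (\<lambda>t. unif_pol f pic U g (t / \<eta>) x a)"
    using integral_unif_pol_ge[OF assms(1-3) c inside outside] .
  then have "\<eta> / real (card (g x)) * (U / \<Delta>)
      \<le> integral {0..\<beta>max} (\<lambda>t. unif_pol f pic U g (t / \<eta>) x a)"
    by (simp add: c_def mult.commute)
  then show ?thesis
    unfolding \<Delta>_def using mix_pol_ge_integral[OF \<open>\<beta>max \<le> 1\<close>] by (rule order_trans)
qed

theorem lemmaH4:
  fixes A :: "'a set"
    and f :: "'x \<Rightarrow> 'a \<Rightarrow> real"
    and pic :: "'x \<Rightarrow> 'a"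
    and U :: real
    and g :: "'x \<Rightarrow> 'a set"
    and \<beta>max \<eta> :: real
    and x :: 'x and a :: 'a
  assumes finA: "finite A"
    and f_range: "\<And>x a. a \<in> A \<Longrightarrow> f x a \<in> {0..1}"
    and pic_A: "\<And>x. pic x \<in> A"
    and U_pos: "U > 0"
    and g_A: "\<And>x. g x \<subseteq> A"
    and \<beta>max: "0 < \<beta>max" "\<beta>max < 1"
    and \<eta>: "\<eta> \<ge> 1"
    and C_ne: "\<And>x \<zeta>. \<zeta> > 0 \<Longrightarrow> cand_set f pic U g x \<zeta> \<noteq> {}"
    and aA: "a \<in> A"
  shows
    "(a \<in> cand_set f pic U g x (\<beta>max / \<eta>) \<longrightarrow>
        mix_pol f pic U g \<beta>max \<eta> x a
          \<ge> (1 - \<beta>max) / real (card (cand_set f pic U g x (\<beta>max / \<eta>)))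
             + \<beta>max / real (card (g x))
      \<and> (1 - \<beta>max) / real (card (cand_set f pic U g x (\<beta>max / \<eta>)))
             + \<beta>max / real (card (g x)) \<ge> 1 / real (card (g x)))
   \<and> (a \<notin> cand_set f pic U g x (\<beta>max / \<eta>) \<and> a \<in> g x \<longrightarrow>
        mix_pol f pic U g \<beta>max \<eta> x a
          \<ge> \<eta> / real (card (g x)) * (U / (f x (pic x) - f x a))
      \<and> \<eta> / real (card (g x)) * (U / (f x (pic x) - f x a)) \<ge> \<eta> * U / real (card (g x)))
   \<and> mix_pol f pic U g \<beta>max \<eta> x a \<ge> 0"
proof -
  have fin: "finite (g x)"
    using finA g_A finite_subset by metis
  have pars: "0 \<le> U" "0 < \<eta>" "0 \<le> \<beta>max" "\<beta>max \<le> 1"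
    using U_pos \<eta> \<beta>max by auto
  let ?C = "cand_set f pic U g x (\<beta>max / \<eta>)"
  let ?\<Delta> = "f x (pic x) - f x a"
  have "(1 - \<beta>max) / real (card ?C) + \<beta>max / real (card (g x)) \<le> mix_pol f pic U g \<beta>max \<eta> x a
      \<and> 1 / real (card (g x)) \<le> (1 - \<beta>max) / real (card ?C) + \<beta>max / real (card (g x))"
    if "a \<in> ?C"
    using mix_pol_ge_mem_cand_set[OF fin pars(1-3) that]
      inverse_card_le_mixture[OF fin cand_set_subset[of f pic U g x "\<beta>max / \<eta>"] _ pars(4)] that by blast
  moreover have "\<eta> / real (card (g x)) * (U / ?\<Delta>) \<le> mix_pol f pic U g \<beta>max \<eta> x a
      \<and> \<eta> * U / real (card (g x)) \<le> \<eta> / real (card (g x)) * (U / ?\<Delta>)"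
    if "a \<notin> ?C" "a \<in> g x"
  proof
    show "\<eta> / real (card (g x)) * (U / ?\<Delta>) \<le> mix_pol f pic U g \<beta>max \<eta> x a"
      using mix_pol_ge_not_mem_cand_set[OF fin pars(1,2) \<beta>max(1) pars(4) that(2,1)] .
    have "U \<le> U / ?\<Delta>"
      using gap_pos_if_not_mem_cand_set[OF pars(1) _ that(2,1)] pars \<beta>max(1) U_pos
        f_range[OF pic_A[of x], of x] f_range[OF aA, of x] by (simp add: le_divide_eq)
    then have "\<eta> / real (card (g x)) * U \<le> \<eta> / real (card (g x)) * (U / ?\<Delta>)"
      using pars by (intro mult_left_mono) auto
    then show "\<eta> * U / real (card (g x)) \<le> \<eta> / real (card (g x)) * (U / ?\<Delta>)"
      by simp
  qed
  ultimately show ?thesis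
    using mix_pol_nonneg[OF pars(4), of f pic U g \<eta> x a] by blast
qed

end
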